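(* Let $(k_n)$ be a nondecreasing integer sequence, $(V^*_n)$ vertices of interest, and $\mathbf{\Phi}=(\Phi_n)$ a VN rule, and let $h_{\Phi_n}(g_1,\mathfrak{o}_n(g_2),V^*_n)=\sum_{v\in V^*_n}\mathbf{1}\{\mathrm{rank}_{\Phi_n(g_1,\mathfrak{o}_n(g_2),V^*_n)}(\mathfrak{o}_n(v))\le k_n\}$. Let $(\hat h_{\Phi_n})_n$ be any sequence of label-agnostic estimators of $(h_{\Phi_n})_n$, i.e. satisfying $\hat h_{\Phi_n}(g_1,\mathfrak{o}_n(g_2),V^*_n)=\hat h_{\Phi_n}(g_1,\mathfrak{o}_n(g_2'),V^*_n)$ whenever $g_2\simeq g_2'$ (graph isomorphism). Then there exist sequences of nested-core nominatable distributions $\mathbf{F}=(F_n)$ and $\mathbf{F}'=(F_n')$ such that for all $n$ sufficiently large, if $(G_1,G_2)\sim F_n$ and $(G_1',G_2')\sim F_n'$, then $d_{\mathrm{TV}}\big(\mathcal{L}(h_{\Phi_n}(G_1,\mathfrak{o}(G_2),V^*_n)),\mathcal{L}(h_{\Phi_n}(G_1',\mathfrak{o}(G_2'),V^*_n))\big)>0$, while $\mathcal{L}(\hat h_{\Phi_n}(G_1,\mathfrak{o}(G_2),V^*_n))=\mathcal{L}(\hat h_{\Phi_n}(G_1',\mathfrak{o}(G_2'),V^*_n))$.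
   Context: $\mathcal{L}(X)$ denotes the law of $X$ and $d_{\mathrm{TV}}$ total variation distance. $\mathcal{G}_n$ denotes labeled graphs on $n$ vertices. A nominatable distribution of order $(n,m)$ is a distribution on $\mathcal{G}_n\times\mathcal{G}_m$ with vertex sets $V_1=\{v_1,\dots,v_n\}$, $V_2=\{u_1,\dots,u_m\}$, $v_i=u_i$ for $i\le c$ (core $C$), disjoint junk sets $J_1=V_1\setminus C$, $J_2=V_2\setminus C$, and $G_1[J_1]$, $G_2[J_2]$ conditionally independent given the parameter. A sequence of such distributions has nested cores if eventually the vertex sets of the first graphs, of the second graphs, and the cores are increasing in $n$. An obfuscating function is a bijection $\mathfrak{o}$ from $V_2$ onto a set $W$ disjoint from $V_1,V_2$. For $u\in V(g)$, $\mathcal{I}(u;g)$ is the orbit of $u$ under automorphisms of $g$. A VN scheme $\Phi_n$ maps $(g_1,\mathfrak{o}(g_2),V^* )$ with $V^*\subset V_1$ to a total ordering of $W$, such that the set of positions of $\mathfrak{o}(\mathcal{I}(u;g_2))$ does not depend on the choice of obfuscating function $\mathfrak{o}$ (for every $g_1,g_2,V^*,u$); $\mathrm{rank}(\cdot)$ denotes position in this ordering. A VN rule is a sequence of VN schemes. *)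

theory Defs
  imports "HOL-Probability.Probability"
begin

type_synonym graph = "nat set \<times> (nat \<times> nat) set"

definition wf_graph :: "graph \<Rightarrow> bool" where
  "wf_graph g \<longleftrightarrow> finite (fst g) \<and> snd g \<subseteq> fst g \<times> fst g \<and> sym (snd g)
     \<and> (\<forall>x. (x, x) \<notin> snd g)"

definition induced :: "graph \<Rightarrow> nat set \<Rightarrow> graph" where
  "induced g S = (S, snd g \<inter> (S \<times> S))"

definition relabel :: "(nat \<Rightarrow> nat) \<Rightarrow> graph \<Rightarrow> graph" where
  "relabel f g = (f ` fst g, map_prod f f ` snd g)"

definition graph_iso :: "graph \<Rightarrow> graph \<Rightarrow> bool" where
  "graph_iso g g' \<longleftrightarrow> (\<exists>f. bij_betw f (fst g) (fst g') \<and>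
     (\<forall>x\<in>fst g. \<forall>y\<in>fst g. (x, y) \<in> snd g \<longleftrightarrow> (f x, f y) \<in> snd g'))"

definition orbit :: "nat \<Rightarrow> graph \<Rightarrow> nat set" where
  "orbit u g = {f u | f. bij_betw f (fst g) (fst g) \<and>
     (\<forall>x\<in>fst g. \<forall>y\<in>fst g. (x, y) \<in> snd g \<longleftrightarrow> (f x, f y) \<in> snd g)}"

definition obfuscating :: "(nat \<Rightarrow> nat) \<Rightarrow> nat set \<Rightarrow> nat set \<Rightarrow> bool" where
  "obfuscating ob V1 V2 \<longleftrightarrow> inj_on ob V2 \<and> ob ` V2 \<inter> V1 = {} \<and> ob ` V2 \<inter> V2 = {}"

text \<open>A total ordering of W is a list enumerating W without repetition; rank is the
  (1-based) position.\<close>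
definition total_ordering :: "nat list \<Rightarrow> nat set \<Rightarrow> bool" where
  "total_ordering xs W \<longleftrightarrow> distinct xs \<and> set xs = W"

definition rank :: "nat list \<Rightarrow> nat \<Rightarrow> nat" where
  "rank xs w = Suc (LEAST i. i < length xs \<and> xs ! i = w)"

definition vn_scheme :: "(graph \<Rightarrow> graph \<Rightarrow> nat set \<Rightarrow> nat list) \<Rightarrow> bool" where
  "vn_scheme \<Phi> \<longleftrightarrow> (\<forall>g1 g2 Vs ob. wf_graph g1 \<and> wf_graph g2 \<and> Vs \<subseteq> fst g1
      \<and> obfuscating ob (fst g1) (fst g2) \<longrightarrow>
        total_ordering (\<Phi> g1 (relabel ob g2) Vs) (ob ` fst g2) \<and>
        (\<forall>ob' u. obfuscating ob' (fst g1) (fst g2) \<and> u \<in> fst g2 \<longrightarrow>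
           (\<lambda>x. rank (\<Phi> g1 (relabel ob g2) Vs) (ob x)) ` orbit u g2
         = (\<lambda>x. rank (\<Phi> g1 (relabel ob' g2) Vs) (ob' x)) ` orbit u g2))"

definition h_count :: "(graph \<Rightarrow> graph \<Rightarrow> nat set \<Rightarrow> nat list) \<Rightarrow> int \<Rightarrow> nat set
    \<Rightarrow> graph \<Rightarrow> (nat \<Rightarrow> nat) \<Rightarrow> graph \<Rightarrow> nat" where
  "h_count \<Phi> k Vs g1 ob g2 = card {v \<in> Vs. int (rank (\<Phi> g1 (relabel ob g2) Vs) (ob v)) \<le> k}"

definition label_agnostic :: "(nat \<Rightarrow> graph \<Rightarrow> graph \<Rightarrow> nat set \<Rightarrow> 'b) \<Rightarrow> (nat \<Rightarrow> nat set) \<Rightarrow> bool" where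
  "label_agnostic hh Vs \<longleftrightarrow> (\<forall>n g1 g2 g2' ob. wf_graph g1 \<and> wf_graph g2 \<and> wf_graph g2'
      \<and> fst g2' = fst g2 \<and> graph_iso g2 g2' \<and> obfuscating ob (fst g1) (fst g2) \<longrightarrow>
      hh n g1 (relabel ob g2) (Vs n) = hh n g1 (relabel ob g2') (Vs n))"

text \<open>Nominatable distribution with first vertex set V1 and second vertex set V2
  (order (card V1, card V2)); core C = V1 \<inter> V2, junk J1 = V1 - C, J2 = V2 - C.
  Conditional independence of G1[J1], G2[J2] given a (latent, countable) parameter.\<close>
definition nominatable :: "(graph \<times> graph) pmf \<Rightarrow> nat set \<Rightarrow> nat set \<Rightarrow> bool" where
  "nominatable F V1 V2 \<longleftrightarrow> finite V1 \<and> finite V2 \<and>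
     (\<forall>p\<in>set_pmf F. wf_graph (fst p) \<and> wf_graph (snd p) \<and> fst (fst p) = V1 \<and> fst (snd p) = V2) \<and>
     (\<exists>(\<Theta> :: nat pmf) K. F = bind_pmf \<Theta> K \<and>
        (\<forall>\<theta>\<in>set_pmf \<Theta>.
           map_pmf (\<lambda>p. (induced (fst p) (V1 - V2), induced (snd p) (V2 - V1))) (K \<theta>)
         = pair_pmf (map_pmf (\<lambda>p. induced (fst p) (V1 - V2)) (K \<theta>))
                    (map_pmf (\<lambda>p. induced (snd p) (V2 - V1)) (K \<theta>))))"

definition nested_cores :: "(nat \<Rightarrow> nat set) \<Rightarrow> (nat \<Rightarrow> nat set) \<Rightarrow> bool" where
  "nested_cores V1 V2 \<longleftrightarrow> (\<exists>N. \<forall>n\<ge>N. V1 n \<subseteq> V1 (Suc n) \<and> V2 n \<subseteq> V2 (Suc n)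
      \<and> V1 n \<inter> V2 n \<subseteq> V1 (Suc n) \<inter> V2 (Suc n))"

definition tv_dist :: "'a pmf \<Rightarrow> 'a pmf \<Rightarrow> real" where
  "tv_dist p q = (SUP A. \<bar>measure_pmf.prob p A - measure_pmf.prob q A\<bar>)"

end

theory Submission
  imports Defs
begin

(* Take G1 empty and G2 a rigid graph, here the spider obtained from the path 0 - 1 - ... - (M-2)
   by attaching the pendant vertex M-1 to 2: its three legs have the distinct lengths 1, 2 and M-4
   once M >= 7. All orbits of a rigid graph are singletons, so a VN scheme places each vertex u
   of G2 at a rank r(u) that does not depend on the obfuscation. Since r is a bijection onto
   {1..M} and 1 <= k < M, the threshold r(u) <= k separates some vertex a of interest from some
   vertex b outside V*. Relabelling G2 by the transposition of a and b gives an isomorphic graph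
   on which h changes by exactly one, while a label-agnostic estimator cannot tell the two apart;
   the point masses at (G1, G2) and at (G1, relabelled G2) are the required distributions. *)

definition automorphism :: "(nat \<Rightarrow> nat) \<Rightarrow> graph \<Rightarrow> bool" where
  "automorphism f g \<longleftrightarrow> bij_betw f (fst g) (fst g) \<and>
     (\<forall>x\<in>fst g. \<forall>y\<in>fst g. (x, y) \<in> snd g \<longleftrightarrow> (f x, f y) \<in> snd g)"

definition rigid :: "graph \<Rightarrow> bool" where
  "rigid g \<longleftrightarrow> (\<forall>f. automorphism f g \<longrightarrow> (\<forall>x\<in>fst g. f x = x))"

definition neighbours :: "graph \<Rightarrow> nat \<Rightarrow> nat set" where
  "neighbours g v = {w. (v, w) \<in> snd g}"

lemma orbit_eq_automorphism: "orbit u g = {f u |f. automorphism f g}"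
  unfolding orbit_def automorphism_def ..

lemma orbit_rigid:
  assumes "rigid g" "u \<in> fst g"
  shows "orbit u g = {u}"
proof -
  have "f u = u" if "automorphism f g" for f
    using assms that unfolding rigid_def by blast
  then have "{f u |f. automorphism f g} \<subseteq> {u}" by blast
  moreover have "automorphism id g" by (simp add: automorphism_def)
  then have "id u \<in> {f u |f. automorphism f g}" by blast
  ultimately show ?thesis unfolding orbit_eq_automorphism by auto
qed

lemma neighbours_subset: "wf_graph g \<Longrightarrow> neighbours g v \<subseteq> fst g"
  unfolding wf_graph_def neighbours_def by auto

lemma automorphism_image_neighbours:
  assumes g: "wf_graph g" and f: "automorphism f g" and v: "v \<in> fst g"
  shows "f ` neighbours g v = neighbours g (f v)"
proof (intro equalityI subsetI)
  fix z assume "z \<in> f ` neighbours g v"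
  then obtain w where "w \<in> neighbours g v" "z = f w" by blast
  with neighbours_subset[OF g] f v show "z \<in> neighbours g (f v)"
    unfolding automorphism_def neighbours_def by blast
next
  fix z assume z: "z \<in> neighbours g (f v)"
  then have "z \<in> fst g" using neighbours_subset[OF g] by blast
  then obtain w where "w \<in> fst g" "z = f w"
    using f unfolding automorphism_def bij_betw_def by blast
  with z f v show "z \<in> f ` neighbours g v"
    unfolding automorphism_def neighbours_def by blast
qed

lemma automorphism_card_neighbours:
  assumes "wf_graph g" "automorphism f g" "v \<in> fst g"
  shows "card (neighbours g (f v)) = card (neighbours g v)"
proof -
  have "inj_on f (neighbours g v)"
    using assms(2) neighbours_subset[OF assms(1)]
    unfolding automorphism_def bij_betw_def by (blast intro: inj_on_subset)
  then show ?thesis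
    using automorphism_image_neighbours[OF assms] by (metis card_image)
qed

lemma automorphism_fixes_last_neighbour:
  assumes g: "wf_graph g" and f: "automorphism f g" and u: "u \<in> fst g" "f u = u"
    and w: "w \<in> neighbours g u" and others: "\<forall>x\<in>neighbours g u - {w}. f x = x"
  shows "f w = w"
proof -
  have "f w \<in> neighbours g u"
    using automorphism_image_neighbours[OF g f u(1)] u(2) w by (metis image_eqI)
  moreover have "f w \<noteq> x" if "x \<in> neighbours g u - {w}" for x
  proof
    assume "f w = x"
    with that others have "f w = f x" by simp
    moreover have "w \<in> fst g" "x \<in> fst g" using that w neighbours_subset[OF g] by blast+
    ultimately show False
      using that f unfolding automorphism_def bij_betw_def inj_on_def by blast
  qed
  ultimately show ?thesis by blast
qed

definition spider :: "nat \<Rightarrow> graph" where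
  "spider M = ({0..<M}, {(i, j). (j = Suc i \<and> Suc i < M - 1) \<or> (i = Suc j \<and> Suc j < M - 1)
     \<or> (i = 2 \<and> j = M - 1) \<or> (i = M - 1 \<and> j = 2)})"

lemma fst_spider: "fst (spider M) = {0..<M}"
  by (simp add: spider_def)

lemma wf_graph_spider: "3 < M \<Longrightarrow> wf_graph (spider M)"
  unfolding wf_graph_def spider_def sym_def by auto

lemma neighbours_spider:
  assumes "7 \<le> M"
  shows "neighbours (spider M) 0 = {1}" and "neighbours (spider M) 1 = {0, 2}"
    and "neighbours (spider M) 2 = {1, 3, M - 1}" and "neighbours (spider M) (M - 2) = {M - 3}"
    and "neighbours (spider M) (M - 1) = {2}"
    and "3 \<le> i \<Longrightarrow> i \<le> M - 3 \<Longrightarrow> neighbours (spider M) i = {i - 1, i + 1}"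
  using assms unfolding neighbours_def spider_def by auto

lemma card_neighbours_spider:
  assumes "7 \<le> M" "v < M"
  shows "card (neighbours (spider M) v) =
    (if v = 2 then 3 else if v = 0 \<or> v = M - 2 \<or> v = M - 1 then 1 else 2)"
proof -
  consider "v = 0" | "v = 1" | "v = 2" | "3 \<le> v \<and> v \<le> M - 3" | "v = M - 2" | "v = M - 1"
    using assms by linarith
  then show ?thesis
  proof cases
    case 4
    then show ?thesis using assms neighbours_spider(6)[OF assms(1), of v] by auto
  qed (use assms neighbours_spider(1-5)[OF assms(1)] in auto)
qed

lemma automorphism_spider_fixes_branch:
  assumes M: "7 \<le> M" and f: "automorphism f (spider M)"
  shows "f 1 = 1" and "f 2 = 2" and "f (M - 1) = M - 1"
proof -
  let ?N = "neighbours (spider M)"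
  have g: "wf_graph (spider M)" using wf_graph_spider M by simp
  note V = fst_spider[of M]
  have maps: "f v < M" if "v < M" for v
    using f that V unfolding automorphism_def bij_betw_def by auto
  have "inj_on f {0..<M}" using f V unfolding automorphism_def bij_betw_def by simp
  then have inj: "f v \<noteq> f w" if "v < M" "w < M" "v \<noteq> w" for v w
    using that by (simp add: inj_on_eq_iff)
  have deg: "card (?N (f v)) = card (?N v)" if "v < M" for v
    using automorphism_card_neighbours[OF g f] that V by simp
  have image: "f ` ?N v = ?N (f v)" if "v < M" for v
    using automorphism_image_neighbours[OF g f] that V by simp
  note N = neighbours_spider[OF M] and card_N = card_neighbours_spider[OF M]
  \<comment> \<open>2 is the only vertex of degree 3, M - 1 is the only leaf among its neighbours,
    and 1 differs from 3 by having a leaf neighbour.\<close>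
  show f2: "f 2 = 2"
    using deg[of 2] card_N[of 2] card_N[of "f 2"] maps[of 2] M by (auto split: if_splits)
  have f_nb2: "f ` {1, 3, M - 1} = {1, 3, M - 1}"
    using image[of 2] f2 N(3) M by simp
  have "f (M - 1) \<in> {1, 3, M - 1}" using f_nb2 by blast
  then show f_pendant: "f (M - 1) = M - 1"
    using deg[of "M - 1"] card_N[of "M - 1"] card_N[of 1] card_N[of 3] M by (auto split: if_splits)
  have "f 1 \<noteq> 3"
  proof
    assume "f 1 = 3"
    then have "f 0 \<in> {2, 4}" using image[of 1] N(2) N(6)[of 3] M by auto
    then show False
      using deg[of 0] card_N[of 0] card_N[of 2] card_N[of 4] M by (auto split: if_splits)
  qed
  moreover have "f 1 \<in> {1, 3, M - 1}" using f_nb2 by blast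
  moreover have "f 1 \<noteq> M - 1" using f_pendant inj[of 1 "M - 1"] M by auto
  ultimately show "f 1 = 1" by blast
qed

lemma rigid_spider:
  assumes M: "7 \<le> M"
  shows "rigid (spider M)"
  unfolding rigid_def
proof (intro allI impI)
  fix f assume f: "automorphism f (spider M)"
  let ?N = "neighbours (spider M)"
  have g: "wf_graph (spider M)" using wf_graph_spider M by simp
  note V = fst_spider[of M] and N = neighbours_spider[OF M]
  note branch = automorphism_spider_fixes_branch[OF M f]
  have fixes_nb: "f w = w" if "u < M" "f u = u" "w \<in> ?N u" "\<forall>x\<in>?N u - {w}. f x = x" for u w
    using automorphism_fixes_last_neighbour[OF g f] that V by simp
  have f0: "f 0 = 0" using fixes_nb[of 1 0] branch N(2) M by auto
  have f3: "f 3 = 3" using fixes_nb[of 2 3] branch N(3) M by auto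
  have path: "f i = i \<and> f (i - 1) = i - 1" if "3 \<le> i" "i \<le> M - 2" for i
    using that(1)
  proof (induction i rule: dec_induct)
    case base
    then show ?case using branch f3 by simp
  next
    case (step i)
    have "?N i = {i - 1, i + 1}" "i < M" using N(6)[of i] step.hyps that(2) M by auto
    moreover have "\<forall>x\<in>{i - 1, i + 1} - {i + 1}. f x = x" using step.IH by auto
    ultimately have "f (i + 1) = i + 1" using fixes_nb[of i "i + 1"] step.IH by simp
    then show ?case using step.IH by simp
  qed
  show "\<forall>x\<in>fst (spider M). f x = x"
  proof
    fix x assume "x \<in> fst (spider M)"
    then consider "x \<le> 2" | "3 \<le> x \<and> x \<le> M - 2" | "x = M - 1" using V by fastforce
    then show "f x = x"
      by cases (use f0 branch path in \<open>auto simp: le_Suc_eq numeral_2_eq_2\<close>)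
  qed
qed

lemma fst_relabel [simp]: "fst (relabel f g) = f ` fst g"
  by (simp add: relabel_def)

lemma relabel_id: "relabel id g = g"
  unfolding relabel_def by (simp add: map_prod.id)

lemma relabel_relabel: "relabel f (relabel h g) = relabel (f \<circ> h) g"
  unfolding relabel_def by (simp add: image_comp map_prod.comp)

lemma wf_graph_relabel:
  assumes "wf_graph g" "inj_on f (fst g)"
  shows "wf_graph (relabel f g)"
  using assms unfolding wf_graph_def relabel_def sym_def inj_on_def by fastforce

lemma graph_iso_relabel:
  assumes g: "wf_graph g" and f: "inj_on f (fst g)"
  shows "graph_iso g (relabel f g)"
  unfolding graph_iso_def
proof (intro exI conjI ballI)
  show "bij_betw f (fst g) (fst (relabel f g))"
    using f unfolding relabel_def bij_betw_def by simp
  fix x y assume xy: "x \<in> fst g" "y \<in> fst g"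
  have "(x, y) \<in> snd g" if edge: "(f x, f y) \<in> map_prod f f ` snd g"
  proof -
    obtain a b where ab: "(a, b) \<in> snd g" "f a = f x" "f b = f y" using edge by fastforce
    then have "a \<in> fst g" "b \<in> fst g" using g unfolding wf_graph_def by auto
    with ab xy f have "a = x" "b = y" unfolding inj_on_def by auto
    with ab show ?thesis by simp
  qed
  then show "(x, y) \<in> snd g \<longleftrightarrow> (f x, f y) \<in> snd (relabel f g)"
    unfolding relabel_def by force
qed

lemma ex_obfuscating:
  assumes "finite V1" "finite V2"
  shows "\<exists>ob. obfuscating ob V1 V2"
proof
  let ?m = "Max (V1 \<union> V2)"
  have "y \<noteq> x + Suc ?m" if "y \<in> V1 \<union> V2" for x y
  proof -
    have "y \<le> ?m" using that assms by simp
    then show ?thesis by simp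
  qed
  then show "obfuscating (\<lambda>x. x + Suc ?m) V1 V2"
    unfolding obfuscating_def by (auto simp: inj_on_def)
qed

lemma obfuscating_comp_permutation:
  assumes "obfuscating ob V1 V2" "bij_betw \<sigma> V2 V2"
  shows "obfuscating (ob \<circ> \<sigma>) V1 V2"
proof -
  have "(ob \<circ> \<sigma>) ` V2 = ob ` V2"
    using assms(2) unfolding bij_betw_def by (metis image_comp)
  then show ?thesis
    using assms unfolding obfuscating_def bij_betw_def by (simp add: comp_inj_on)
qed

lemma rank_nth: "distinct xs \<Longrightarrow> i < length xs \<Longrightarrow> rank xs (xs ! i) = Suc i"
  unfolding rank_def
  by (rule arg_cong[where f = Suc], rule Least_equality) (auto simp: nth_eq_iff_index_eq)

lemma rank_image_total_ordering:
  assumes "total_ordering xs W"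
  shows "rank xs ` W = {1..card W}"
proof -
  have xs: "distinct xs" "W = (!) xs ` {..<length xs}" "card W = length xs"
    using assms distinct_card[of xs] unfolding total_ordering_def by (auto simp: set_conv_nth)
  then have "rank xs ` W = Suc ` {..<length xs}"
    by (auto simp: image_image rank_nth)
  then show ?thesis
    using xs(3) by (simp add: image_Suc_lessThan)
qed

lemma vn_scheme_rank_image:
  assumes "vn_scheme \<Phi>" "wf_graph g1" "wf_graph g2" "Vs \<subseteq> fst g1"
    and ob: "obfuscating ob (fst g1) (fst g2)"
  shows "(\<lambda>v. rank (\<Phi> g1 (relabel ob g2) Vs) (ob v)) ` fst g2 = {1..card (fst g2)}"
proof -
  have "total_ordering (\<Phi> g1 (relabel ob g2) Vs) (ob ` fst g2)"
    using assms unfolding vn_scheme_def by blast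
  moreover have "card (ob ` fst g2) = card (fst g2)"
    using ob by (simp add: obfuscating_def card_image)
  ultimately show ?thesis
    by (simp add: rank_image_total_ordering flip: image_image)
qed

lemma vn_scheme_rank_rigid:
  assumes "vn_scheme \<Phi>" "wf_graph g1" "wf_graph g2" "rigid g2" "Vs \<subseteq> fst g1"
    and "obfuscating ob (fst g1) (fst g2)" "obfuscating ob' (fst g1) (fst g2)" "u \<in> fst g2"
  shows "rank (\<Phi> g1 (relabel ob g2) Vs) (ob u) = rank (\<Phi> g1 (relabel ob' g2) Vs) (ob' u)"
proof -
  have "(\<lambda>x. rank (\<Phi> g1 (relabel ob g2) Vs) (ob x)) ` orbit u g2
      = (\<lambda>x. rank (\<Phi> g1 (relabel ob' g2) Vs) (ob' x)) ` orbit u g2"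
    using assms(1-3,5-8) unfolding vn_scheme_def by blast
  then show ?thesis using orbit_rigid[OF assms(4,8)] by simp
qed

lemma h_count_relabel_rigid:
  assumes vn: "vn_scheme \<Phi>" and g1: "wf_graph g1" and g2: "wf_graph g2" "rigid g2"
    and Vs: "Vs \<subseteq> fst g1 \<inter> fst g2"
    and \<sigma>: "bij_betw \<sigma> (fst g2) (fst g2)" "\<sigma> \<circ> \<sigma> = id"
    and ob: "obfuscating ob (fst g1) (fst g2)" and ob0: "obfuscating ob0 (fst g1) (fst g2)"
  shows "h_count \<Phi> k Vs g1 ob (relabel \<sigma> g2) =
    card {v \<in> Vs. int (rank (\<Phi> g1 (relabel ob0 g2) Vs) (ob0 (\<sigma> v))) \<le> k}"
proof -
  have "rank (\<Phi> g1 (relabel (ob \<circ> \<sigma>) g2) Vs) (ob v)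
      = rank (\<Phi> g1 (relabel ob0 g2) Vs) (ob0 (\<sigma> v))" if "v \<in> Vs" for v
  proof -
    have "ob v = (ob \<circ> \<sigma>) (\<sigma> v)" using \<sigma>(2) by (metis comp_apply id_apply)
    moreover have "\<sigma> v \<in> fst g2" using that Vs \<sigma>(1) by (auto simp: bij_betw_def)
    ultimately show ?thesis
      using vn_scheme_rank_rigid[OF vn g1 g2 _ obfuscating_comp_permutation[OF ob \<sigma>(1)] ob0] Vs
      by simp
  qed
  then show ?thesis
    unfolding h_count_def relabel_relabel by (intro arg_cong[where f = card]) auto
qed

lemma card_Collect_differ_at_single_point:
  assumes "finite S" "a \<in> S" "\<forall>v\<in>S - {a}. P v = Q v" "P a \<noteq> Q a"
  shows "card {v\<in>S. P v} \<noteq> card {v\<in>S. Q v}"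
proof (cases "P a")
  case True
  then have "{v\<in>S. P v} = insert a {v\<in>S. Q v}" "a \<notin> {v\<in>S. Q v}" using assms by auto
  then show ?thesis using assms(1) by simp
next
  case False
  then have "{v\<in>S. Q v} = insert a {v\<in>S. P v}" "a \<notin> {v\<in>S. P v}" using assms by auto
  then show ?thesis using assms(1) by simp
qed

lemma ex_pred_differs_across:
  assumes "A \<noteq> {}" "B \<noteq> {}" "u \<in> A \<union> B" "w \<in> A \<union> B" "P u" "\<not> P w"
  shows "\<exists>a\<in>A. \<exists>b\<in>B. P a \<noteq> P b"
  using assms by blast

lemma ex_transposition_changing_h_count:
  fixes k :: int
  assumes vn: "vn_scheme \<Phi>" and g1: "wf_graph g1" and g2: "wf_graph g2" "rigid g2"
    and Vs: "Vs \<subseteq> fst g1 \<inter> fst g2" "Vs \<noteq> {}" "fst g2 - Vs \<noteq> {}"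
    and k: "1 \<le> k" "k < card (fst g2)"
  shows "\<exists>a\<in>Vs. \<exists>b\<in>fst g2 - Vs. \<forall>ob. obfuscating ob (fst g1) (fst g2) \<longrightarrow>
    h_count \<Phi> k Vs g1 ob g2 \<noteq> h_count \<Phi> k Vs g1 ob (relabel (Transposition.transpose a b) g2)"
proof -
  have "finite (fst g1)" "finite (fst g2)" using g1 g2(1) by (simp_all add: wf_graph_def)
  then obtain ob0 where ob0: "obfuscating ob0 (fst g1) (fst g2)" using ex_obfuscating by blast
  define r where "r v = rank (\<Phi> g1 (relabel ob0 g2) Vs) (ob0 v)" for v
  have "Vs \<subseteq> fst g1" using Vs(1) by blast
  then have "r ` fst g2 = {1..card (fst g2)}"
    unfolding r_def using vn_scheme_rank_image[OF vn g1 g2(1) _ ob0] by blast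
  then have "1 \<in> r ` fst g2" "card (fst g2) \<in> r ` fst g2" using k by auto
  then obtain u w where "u \<in> fst g2" "r u = 1" "w \<in> fst g2" "r w = card (fst g2)"
    by (metis imageE)
  then obtain a b where ab: "a \<in> Vs" "b \<in> fst g2 - Vs" "(int (r a) \<le> k) \<noteq> (int (r b) \<le> k)"
    using ex_pred_differs_across[of Vs "fst g2 - Vs" u w "\<lambda>v. int (r v) \<le> k"] Vs k by auto
  let ?\<tau> = "Transposition.transpose a b"
  have count: "h_count \<Phi> k Vs g1 ob (relabel \<sigma> g2) = card {v \<in> Vs. int (r (\<sigma> v)) \<le> k}"
    if "obfuscating ob (fst g1) (fst g2)" "bij_betw \<sigma> (fst g2) (fst g2)" "\<sigma> \<circ> \<sigma> = id" for ob \<sigma>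
    using h_count_relabel_rigid[OF vn g1 g2 Vs(1) that(2,3,1) ob0] unfolding r_def .
  have "finite Vs" using g2(1) Vs(1) unfolding wf_graph_def by (meson finite_subset le_infE)
  moreover have "\<forall>v\<in>Vs - {a}. ?\<tau> v = v" using ab(2) by (auto simp: Transposition.transpose_def)
  ultimately have differ: "card {v \<in> Vs. int (r v) \<le> k} \<noteq> card {v \<in> Vs. int (r (?\<tau> v)) \<le> k}"
    using ab by (intro card_Collect_differ_at_single_point) auto
  have "bij_betw ?\<tau> (fst g2) (fst g2)" using ab Vs(1) by (intro bij_betw_transpose_iff) blast
  show ?thesis
  proof (intro bexI[OF _ ab(1)] bexI[OF _ ab(2)] allI impI)
    fix ob assume ob: "obfuscating ob (fst g1) (fst g2)"
    have "h_count \<Phi> k Vs g1 ob g2 = card {v \<in> Vs. int (r v) \<le> k}"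
      using count[OF ob, of id] by (simp add: relabel_id)
    moreover have "h_count \<Phi> k Vs g1 ob (relabel ?\<tau> g2) = card {v \<in> Vs. int (r (?\<tau> v)) \<le> k}"
      using count[OF ob \<open>bij_betw ?\<tau> (fst g2) (fst g2)\<close>] by simp
    ultimately show "h_count \<Phi> k Vs g1 ob g2 \<noteq> h_count \<Phi> k Vs g1 ob (relabel ?\<tau> g2)"
      using differ by simp
  qed
qed

lemma ex_isomorphic_copy_changing_h_count:
  fixes k :: int
  assumes vn: "vn_scheme \<Phi>" and g1: "wf_graph g1" and g2: "wf_graph g2" "rigid g2"
    and Vs: "Vs \<subseteq> fst g1 \<inter> fst g2" "Vs \<noteq> {}" "fst g2 - Vs \<noteq> {}"
    and k: "1 \<le> k" "k < card (fst g2)"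
  shows "\<exists>g2'. wf_graph g2' \<and> fst g2' = fst g2 \<and> graph_iso g2 g2' \<and>
    (\<forall>ob. obfuscating ob (fst g1) (fst g2) \<longrightarrow> h_count \<Phi> k Vs g1 ob g2 \<noteq> h_count \<Phi> k Vs g1 ob g2')"
proof -
  obtain a b where ab: "a \<in> Vs" "b \<in> fst g2 - Vs" and count:
    "\<forall>ob. obfuscating ob (fst g1) (fst g2) \<longrightarrow>
      h_count \<Phi> k Vs g1 ob g2 \<noteq> h_count \<Phi> k Vs g1 ob (relabel (Transposition.transpose a b) g2)"
    using ex_transposition_changing_h_count[OF assms] by blast
  let ?\<tau> = "Transposition.transpose a b"
  show ?thesis
  proof (intro exI conjI)
    show "wf_graph (relabel ?\<tau> g2)" by (rule wf_graph_relabel[OF g2(1)]) simp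
    have "?\<tau> ` fst g2 = fst g2" using ab Vs(1) by (intro transpose_image_eq) blast
    then show "fst (relabel ?\<tau> g2) = fst g2" by simp
    show "graph_iso g2 (relabel ?\<tau> g2)" by (rule graph_iso_relabel[OF g2(1)]) simp
  qed (use count in blast)
qed

lemma nominatable_return_pmf:
  assumes "wf_graph g1" "wf_graph g2"
  shows "nominatable (return_pmf (g1, g2)) (fst g1) (fst g2)"
  unfolding nominatable_def
proof (intro conjI)
  show "\<exists>(\<Theta> :: nat pmf) K. return_pmf (g1, g2) = bind_pmf \<Theta> K \<and>
     (\<forall>\<theta>\<in>set_pmf \<Theta>.
        map_pmf (\<lambda>p. (induced (fst p) (fst g1 - fst g2), induced (snd p) (fst g2 - fst g1))) (K \<theta>)
      = pair_pmf (map_pmf (\<lambda>p. induced (fst p) (fst g1 - fst g2)) (K \<theta>))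
                 (map_pmf (\<lambda>p. induced (snd p) (fst g2 - fst g1)) (K \<theta>)))"
    by (intro exI[of _ "return_pmf 0"] exI[of _ "\<lambda>_. return_pmf (g1, g2)"])
       (simp add: bind_return_pmf)
qed (use assms in \<open>auto simp: wf_graph_def\<close>)

lemma tv_dist_return_pmf_pos:
  assumes "x \<noteq> y"
  shows "tv_dist (return_pmf x) (return_pmf y) > 0"
proof -
  have "(1::real) \<le> (SUP A. \<bar>measure_pmf.prob (return_pmf x) A - measure_pmf.prob (return_pmf y) A\<bar>)"
  proof (rule cSUP_upper2[where x = "{x}"])
    show "bdd_above (range (\<lambda>A. \<bar>measure_pmf.prob (return_pmf x) A - measure_pmf.prob (return_pmf y) A\<bar>))"
      by (rule bdd_aboveI[where M = 1]) (auto simp: indicator_def)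
  qed (use assms in simp_all)
  then show ?thesis unfolding tv_dist_def by linarith
qed

lemma nested_cores_mono: "mono V \<Longrightarrow> nested_cores V V"
  unfolding nested_cores_def mono_iff_le_Suc by auto

lemma ex_spider_copy_separating_point_masses:
  fixes k :: int
  assumes vn: "vn_scheme \<Phi>" and hh: "label_agnostic hh Vs" and M: "7 \<le> M"
    and Vs: "Vs n \<subseteq> {0..<M}" "Vs n \<noteq> {}" "{0..<M} - Vs n \<noteq> {}"
    and k: "1 \<le> k" "k < int M"
  defines "g1 \<equiv> ({0..<M}, {}) :: graph"
  shows "\<exists>g2. nominatable (return_pmf (g1, g2)) {0..<M} {0..<M} \<and>
    (\<forall>ob. obfuscating ob {0..<M} {0..<M} \<longrightarrow>
      tv_dist (map_pmf (\<lambda>p. h_count \<Phi> k (Vs n) (fst p) ob (snd p)) (return_pmf (g1, spider M)))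
              (map_pmf (\<lambda>p. h_count \<Phi> k (Vs n) (fst p) ob (snd p)) (return_pmf (g1, g2))) > 0 \<and>
      map_pmf (\<lambda>p. hh n (fst p) (relabel ob (snd p)) (Vs n)) (return_pmf (g1, spider M))
    = map_pmf (\<lambda>p. hh n (fst p) (relabel ob (snd p)) (Vs n)) (return_pmf (g1, g2)))"
proof -
  have g1: "wf_graph g1" by (simp add: g1_def wf_graph_def sym_def)
  have spider: "wf_graph (spider M)" "rigid (spider M)" using wf_graph_spider rigid_spider M by simp_all
  have V: "fst g1 = {0..<M}" "fst (spider M) = {0..<M}" by (simp_all add: g1_def fst_spider)
  have "Vs n \<subseteq> fst g1 \<inter> fst (spider M)" "fst (spider M) - Vs n \<noteq> {}"
    and "k < int (card (fst (spider M)))" using Vs k V by auto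
  from ex_isomorphic_copy_changing_h_count[OF vn g1 spider this(1) Vs(2) this(2) k(1) this(3)]
  obtain g2 where g2: "wf_graph g2" "fst g2 = {0..<M}" "graph_iso (spider M) g2"
    and differ: "\<And>ob. obfuscating ob {0..<M} {0..<M} \<Longrightarrow>
      h_count \<Phi> k (Vs n) g1 ob (spider M) \<noteq> h_count \<Phi> k (Vs n) g1 ob g2"
    using V by auto
  have "hh n g1 (relabel ob (spider M)) (Vs n) = hh n g1 (relabel ob g2) (Vs n)"
    if "obfuscating ob {0..<M} {0..<M}" for ob
    using hh[unfolded label_agnostic_def, rule_format, of g1 "spider M" g2 ob n] g1 spider g2 V that
    by simp
  then show ?thesis
    using nominatable_return_pmf[OF g1 g2(1)] g2(2) V tv_dist_return_pmf_pos[OF differ]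
    by (intro exI[of _ g2]) auto
qed

lemma ex_mono_sizes_with_room:
  fixes k :: "nat \<Rightarrow> int" and Vs :: "nat \<Rightarrow> nat set"
  assumes "mono k" "\<forall>n. finite (Vs n)"
  shows "\<exists>M. mono M \<and> (\<forall>n. 7 \<le> M n \<and> k n < int (M n) \<and> Vs n \<subseteq> {0..<M n} \<and> {0..<M n} - Vs n \<noteq> {})"
proof -
  define S where "S n = (\<Sum>m\<le>n. Suc (Max (Vs m)))" for n
  have Vs_S: "Vs n \<subseteq> {0..<S n}" for n
  proof
    fix x assume "x \<in> Vs n"
    then have "x < Suc (Max (Vs n))" using assms(2) by (simp add: le_imp_less_Suc)
    also have "\<dots> \<le> S n" unfolding S_def by (rule member_le_sum) auto
    finally show "x \<in> {0..<S n}" by simp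
  qed
  have "mono S" unfolding S_def by (intro monoI sum_mono2) auto
  then have "mono (\<lambda>n. S n + nat (k n) + 7)"
    using assms(1) by (auto simp: mono_def intro!: add_mono nat_mono)
  moreover have "S n \<in> {0..<S n + nat (k n) + 7} - Vs n" for n using Vs_S[of n] by auto
  ultimately show ?thesis using Vs_S by (intro exI[of _ "\<lambda>n. S n + nat (k n) + 7"]) fastforce
qed

theorem lemma1:
  fixes k :: "nat \<Rightarrow> int" and Vs :: "nat \<Rightarrow> nat set"
    and \<Phi> :: "nat \<Rightarrow> graph \<Rightarrow> graph \<Rightarrow> nat set \<Rightarrow> nat list"
    and hh :: "nat \<Rightarrow> graph \<Rightarrow> graph \<Rightarrow> nat set \<Rightarrow> 'b"
  assumes "mono k" and "\<forall>n. k n \<ge> 1"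
    and "\<forall>n. finite (Vs n) \<and> Vs n \<noteq> {}"
    and "\<forall>n. vn_scheme (\<Phi> n)"
    and "label_agnostic hh Vs"
  shows "\<exists>F V1 V2 F' V1' V2'.
     (\<forall>n. nominatable (F n) (V1 n) (V2 n)) \<and> (\<forall>n. nominatable (F' n) (V1' n) (V2' n)) \<and>
     nested_cores V1 V2 \<and> nested_cores V1' V2' \<and>
     (\<exists>N. \<forall>n\<ge>N. Vs n \<subseteq> V1 n \<inter> V2 n \<and> Vs n \<subseteq> V1' n \<inter> V2' n \<and>
        (\<forall>ob. obfuscating ob (V1 n) (V2 n) \<and> obfuscating ob (V1' n) (V2' n) \<longrightarrow>
           tv_dist (map_pmf (\<lambda>p. h_count (\<Phi> n) (k n) (Vs n) (fst p) ob (snd p)) (F n))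
                   (map_pmf (\<lambda>p. h_count (\<Phi> n) (k n) (Vs n) (fst p) ob (snd p)) (F' n)) > 0 \<and>
           map_pmf (\<lambda>p. hh n (fst p) (relabel ob (snd p)) (Vs n)) (F n)
         = map_pmf (\<lambda>p. hh n (fst p) (relabel ob (snd p)) (Vs n)) (F' n)))"
proof -
  obtain M where M: "mono M" "\<And>n. 7 \<le> M n" "\<And>n. k n < int (M n)" "\<And>n. Vs n \<subseteq> {0..<M n}"
    "\<And>n. {0..<M n} - Vs n \<noteq> {}"
    using ex_mono_sizes_with_room[OF assms(1)] assms(3) by metis
  let ?g1 = "\<lambda>n. ({0..<M n}, {}) :: graph"
  have "\<forall>n. \<exists>g2. nominatable (return_pmf (?g1 n, g2)) {0..<M n} {0..<M n} \<and>
    (\<forall>ob. obfuscating ob {0..<M n} {0..<M n} \<longrightarrow>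
      tv_dist (map_pmf (\<lambda>p. h_count (\<Phi> n) (k n) (Vs n) (fst p) ob (snd p)) (return_pmf (?g1 n, spider (M n))))
              (map_pmf (\<lambda>p. h_count (\<Phi> n) (k n) (Vs n) (fst p) ob (snd p)) (return_pmf (?g1 n, g2))) > 0 \<and>
      map_pmf (\<lambda>p. hh n (fst p) (relabel ob (snd p)) (Vs n)) (return_pmf (?g1 n, spider (M n)))
    = map_pmf (\<lambda>p. hh n (fst p) (relabel ob (snd p)) (Vs n)) (return_pmf (?g1 n, g2)))"
    (is "\<forall>n. \<exists>g2. ?P n g2")
    by (intro allI ex_spider_copy_separating_point_masses[OF assms(4)[rule_format] assms(5)])
      (use M assms(2,3) in auto)
  then obtain G where G: "\<forall>n. ?P n (G n)" by (rule choice[THEN exE])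
  have nominatable_spider: "nominatable (return_pmf (?g1 n, spider (M n))) {0..<M n} {0..<M n}" for n
    using nominatable_return_pmf[of "?g1 n" "spider (M n)"] wf_graph_spider[of "M n"] M(2)[of n]
    by (simp add: fst_spider wf_graph_def sym_def)
  let ?V = "\<lambda>n. {0..<M n}"
  have nested: "nested_cores ?V ?V" using M(1) by (intro nested_cores_mono) (auto simp: mono_def)
  show ?thesis
    apply (rule exI[of _ "\<lambda>n. return_pmf (?g1 n, spider (M n))"], rule exI[of _ ?V], rule exI[of _ ?V])
    apply (rule exI[of _ "\<lambda>n. return_pmf (?g1 n, G n)"], rule exI[of _ ?V], rule exI[of _ ?V])
    using nominatable_spider G nested M(4) by (auto intro!: exI[of _ "0::nat"])
qed

end
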